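(* Let $\|\cdot\|$ be a norm on $\mathbb{R}^d$, $\rho\ge 0$, and $\eta\in[0,1)$. Define $$\mathcal{G}_{\mathsf{mean}}(\rho,\eta)=\Big\{p \;:\; \|\mathbb{E}_r[X]-\mathbb{E}_p[X]\|\le\rho \text{ for all } r\le \tfrac{p}{1-\eta}\Big\}.$$ Then for every $\epsilon$ with $2\epsilon\le\eta<1$, $$\sup_{p_1,p_2\in\mathcal{G}_{\mathsf{mean}}(\rho,\eta):\ \mathsf{TV}(p_1,p_2)\le 2\epsilon}\ \|\mathbb{E}_{p_1}[X]-\mathbb{E}_{p_2}[X]\|\le 2\rho .$$
   Context: All distributions are probability distributions on $\mathbb{R}^d$ (with finite means where used). For distributions $r,p$ and $\eta\in[0,1)$, the notation $r\le \frac{p}{1-\eta}$ means that $r$ is a probability distribution with $r(A)\le p(A)/(1-\eta)$ for every measurable set $A$ (i.e. $r$ is obtained from $p$ by deleting at most an $\eta$ fraction of mass and renormalizing). $\mathsf{TV}(p,q)=\sup_A |p(A)-q(A)|$ is the total variation distance. *)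

theory Defs
  imports "HOL-Probability.Probability"
begin

definition is_norm :: "('a::euclidean_space \<Rightarrow> real) \<Rightarrow> bool" where
  "is_norm N \<longleftrightarrow> (\<forall>x. N x \<ge> 0) \<and> (\<forall>x. N x = 0 \<longleftrightarrow> x = 0)
     \<and> (\<forall>c x. N (c *\<^sub>R x) = \<bar>c\<bar> * N x) \<and> (\<forall>x y. N (x + y) \<le> N x + N y)"

definition is_distr :: "'a::euclidean_space measure \<Rightarrow> bool" where
  "is_distr p \<longleftrightarrow> prob_space p \<and> sets p = sets borel"

definition has_mean :: "'a::euclidean_space measure \<Rightarrow> bool" where
  "has_mean p \<longleftrightarrow> is_distr p \<and> integrable p (\<lambda>x. x)"

definition mean :: "'a::euclidean_space measure \<Rightarrow> 'a" where
  "mean p = integral\<^sup>L p (\<lambda>x. x)"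

definition deletion_le :: "'a::euclidean_space measure \<Rightarrow> 'a measure \<Rightarrow> real \<Rightarrow> bool" where
  "deletion_le r p eta \<longleftrightarrow> is_distr r \<and>
     (\<forall>A\<in>sets borel. measure r A \<le> measure p A / (1 - eta))"

definition TV :: "'a::euclidean_space measure \<Rightarrow> 'a measure \<Rightarrow> real" where
  "TV p q = (SUP A\<in>sets borel. \<bar>measure p A - measure q A\<bar>)"

definition G_mean :: "('a::euclidean_space \<Rightarrow> real) \<Rightarrow> real \<Rightarrow> real \<Rightarrow> 'a measure set" where
  "G_mean N rho eta = {p. has_mean p \<and>
     (\<forall>r. deletion_le r p eta \<longrightarrow> N (mean r - mean p) \<le> rho)}"

end

theory Submission
  imports Defs
begin

text \<open>If TV(p1, p2) is at most eta, the normalised common part min(p1, p2) / c has total mass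
  c \<ge> 1 - eta before normalising, so it is an eta-deletion of both p1 and p2. Both means are
  then within rho of its mean, and the triangle inequality gives the bound 2 rho.
  The common part is built from a Hahn decomposition Y of p1 - p2: it is p2 on Y and p1 off Y.\<close>

lemma is_norm_triangle_through:
  assumes "is_norm N"
  shows "N (x - y) \<le> N (z - x) + N (z - y)"
proof -
  have "N (c *\<^sub>R v) = \<bar>c\<bar> * N v" for c v using assms by (simp add: is_norm_def)
  from this[of "-1" "z - x"] have sym: "N (x - z) = N (z - x)" by simp
  have "N (a + b) \<le> N a + N b" for a b using assms by (simp add: is_norm_def)
  from this[of "x - z" "z - y"] show ?thesis by (simp add: sym)
qed

lemma abs_measure_diff_le_TV:
  assumes "is_distr p" "is_distr q" "A \<in> sets borel"
  shows "\<bar>measure p A - measure q A\<bar> \<le> TV p q"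
proof -
  interpret p: prob_space p using assms(1) by (simp add: is_distr_def)
  interpret q: prob_space q using assms(2) by (simp add: is_distr_def)
  have "\<bar>measure p B - measure q B\<bar> \<le> 1" for B
    using p.prob_le_1[of B] q.prob_le_1[of B] measure_nonneg[of p B] measure_nonneg[of q B] by arith
  then have "bdd_above ((\<lambda>A. \<bar>measure p A - measure q A\<bar>) ` sets borel)"
    by (auto intro: bdd_aboveI[where M=1])
  then show ?thesis unfolding TV_def by (rule cSUP_upper[OF assms(3)])
qed

definition glue_measure :: "'a measure \<Rightarrow> 'a measure \<Rightarrow> 'a set \<Rightarrow> 'a measure" where
  "glue_measure M N Y = measure_of (space M) (sets M) (\<lambda>A. emeasure N (A \<inter> Y) + emeasure M (A - Y))"

lemma sets_glue_measure [simp]: "sets (glue_measure M N Y) = sets M"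
  by (simp add: glue_measure_def)

lemma space_glue_measure [simp]: "space (glue_measure M N Y) = space M"
  by (simp add: glue_measure_def)

lemma emeasure_glue_measure:
  assumes sets_eq: "sets N = sets M" and Y: "Y \<in> sets M" and A: "A \<in> sets M"
  shows "emeasure (glue_measure M N Y) A = emeasure N (A \<inter> Y) + emeasure M (A - Y)"
proof -
  have "countably_additive (sets M) (\<lambda>A. emeasure N (A \<inter> Y) + emeasure M (A - Y))"
  proof (rule countably_additiveI)
    fix F :: "nat \<Rightarrow> 'a set"
    assume F: "range F \<subseteq> sets M" "disjoint_family F"
    have "(\<Sum>i. emeasure N (F i \<inter> Y)) = emeasure N (\<Union>i. F i \<inter> Y)"
      using F Y sets_eq by (intro suminf_emeasure) (auto simp: disjoint_family_on_def)
    moreover have "(\<Sum>i. emeasure M (F i - Y)) = emeasure M (\<Union>i. F i - Y)"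
      using F Y by (intro suminf_emeasure) (auto simp: disjoint_family_on_def)
    moreover have "(\<Union>i. F i \<inter> Y) = \<Union> (range F) \<inter> Y" "(\<Union>i. F i - Y) = \<Union> (range F) - Y"
      by blast+
    ultimately show "(\<Sum>i. emeasure N (F i \<inter> Y) + emeasure M (F i - Y))
        = emeasure N (\<Union> (range F) \<inter> Y) + emeasure M (\<Union> (range F) - Y)"
      by (simp add: suminf_add[symmetric])
  qed
  then show ?thesis
    unfolding glue_measure_def
    by (intro emeasure_measure_of_sigma sets.sigma_algebra_axioms A) (simp_all add: positive_def)
qed

text \<open>The two hypotheses say that Y is a Hahn set for M - N, as provided by
  finite_unsigned_Hahn_decomposition.\<close>

lemma emeasure_glue_measure_le:
  assumes sets_eq: "sets N = sets M" and Y: "Y \<in> sets M" and A: "A \<in> sets M"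
    and on_Y: "\<forall>X\<in>sets M. X \<subseteq> Y \<longrightarrow> N X \<le> M X"
    and off_Y: "\<forall>X\<in>sets M. X \<inter> Y = {} \<longrightarrow> M X \<le> N X"
  shows "emeasure (glue_measure M N Y) A \<le> emeasure M A"
    and "emeasure (glue_measure M N Y) A \<le> emeasure N A"
proof -
  have split: "emeasure L (A \<inter> Y) + emeasure L (A - Y) = emeasure L A" if "sets L = sets M" for L
    using plus_emeasure[of "A \<inter> Y" L "A - Y"] that Y A by (auto simp: Int_Diff_Un)
  have "emeasure N (A \<inter> Y) \<le> emeasure M (A \<inter> Y)" "emeasure M (A - Y) \<le> emeasure N (A - Y)"
    using on_Y off_Y Y A by auto
  then show "emeasure (glue_measure M N Y) A \<le> emeasure M A"
    and "emeasure (glue_measure M N Y) A \<le> emeasure N A"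
    using split[of M] split[OF sets_eq] emeasure_glue_measure[OF sets_eq Y A]
    by (metis add_right_mono add_left_mono)+
qed

lemma deletion_le_normalized_submeasure:
  assumes p: "is_distr p" and q: "finite_measure q" "sets q = sets borel"
    and le: "\<forall>A\<in>sets borel. measure q A \<le> measure p A"
    and mass: "1 - eta \<le> measure q UNIV" and "eta < 1"
  shows "deletion_le (scale_measure (1 / measure q UNIV) q) p eta"
proof -
  interpret q: finite_measure q by (rule q(1))
  define c where "c = measure q UNIV"
  have c_pos: "c > 0" using mass \<open>eta < 1\<close> by (simp add: c_def)
  have "space q = UNIV" using sets_eq_imp_space_eq[OF q(2)] by simp
  then have "emeasure (scale_measure (1 / c) q) (space (scale_measure (1 / c) q)) = 1"
    using c_pos by (simp add: space_scale_measure q.emeasure_eq_measure c_def ennreal_mult[symmetric])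
  then have "is_distr (scale_measure (1 / c) q)"
    using q(2) by (simp add: is_distr_def prob_spaceI)
  moreover have "measure (scale_measure (1 / c) q) A \<le> measure p A / (1 - eta)"
    if "A \<in> sets borel" for A
  proof -
    have "measure (scale_measure (1 / c) q) A = measure q A / c" using c_pos by simp
    also have "\<dots> \<le> measure p A / c" using le that c_pos by (simp add: divide_right_mono)
    also have "\<dots> \<le> measure p A / (1 - eta)"
      using mass \<open>eta < 1\<close> by (intro divide_left_mono) (auto simp: c_def)
    finally show ?thesis .
  qed
  ultimately show ?thesis by (simp add: deletion_le_def c_def)
qed

lemma common_deletion_if_TV_le:
  assumes p1: "is_distr p1" and p2: "is_distr p2" and "eta < 1" and tv: "TV p1 p2 \<le> eta"
  shows "\<exists>r. deletion_le r p1 eta \<and> deletion_le r p2 eta"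
proof -
  interpret p1: prob_space p1 using p1 by (simp add: is_distr_def)
  interpret p2: prob_space p2 using p2 by (simp add: is_distr_def)
  have sets1: "sets p1 = sets borel" and sets2: "sets p2 = sets borel"
    using p1 p2 by (simp_all add: is_distr_def)
  obtain Y where Y: "Y \<in> sets p1" and on_Y: "\<forall>X\<in>sets p1. X \<subseteq> Y \<longrightarrow> p2 X \<le> p1 X"
      and off_Y: "\<forall>X\<in>sets p1. X \<inter> Y = {} \<longrightarrow> p1 X \<le> p2 X"
    using finite_unsigned_Hahn_decomposition[of p1 p2] sets1 sets2
      p1.finite_measure_axioms p2.finite_measure_axioms by auto
  define q where "q = glue_measure p1 p2 Y"
  have sets_q: "sets q = sets borel" by (simp add: q_def sets1)
  have sets21: "sets p2 = sets p1" by (simp add: sets1 sets2)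
  have q_le: "emeasure q A \<le> emeasure p1 A" "emeasure q A \<le> emeasure p2 A"
    if "A \<in> sets borel" for A
    using emeasure_glue_measure_le[OF sets21 Y _ on_Y off_Y, of A] that sets1 by (simp_all add: q_def)
  have q_finite: "finite_measure q"
    using q_le[of UNIV] p1.emeasure_space_1 sets_eq_imp_space_eq[OF sets1]
    by (intro finite_measureI) (auto simp: q_def top_unique)
  then interpret q: finite_measure q .
  have q_le': "measure q A \<le> measure p1 A" "measure q A \<le> measure p2 A" if "A \<in> sets borel" for A
    using q_le[OF that] by (simp_all add: q.emeasure_eq_measure p1.emeasure_eq_measure p2.emeasure_eq_measure)
  have "measure q UNIV = measure p2 Y + measure p1 (UNIV - Y)"
    using emeasure_glue_measure[OF sets21 Y, of UNIV] Y sets1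
    by (simp add: q_def q.emeasure_eq_measure[unfolded q_def] p1.emeasure_eq_measure
        p2.emeasure_eq_measure ennreal_plus[symmetric] del: ennreal_plus)
  also have "\<dots> = 1 - (measure p1 Y - measure p2 Y)"
    using p1.prob_compl[OF Y] sets_eq_imp_space_eq[OF sets1] by simp
  finally have "1 - eta \<le> measure q UNIV"
    using abs_measure_diff_le_TV[OF p1 p2, of Y] Y sets1 tv by simp
  then show ?thesis
    using deletion_le_normalized_submeasure[OF _ q_finite sets_q, of _ eta] q_le' p1 p2 \<open>eta < 1\<close>
    by blast
qed

theorem lemma3p1:
  fixes N :: "'a::euclidean_space \<Rightarrow> real" and rho eta eps :: real
  assumes "is_norm N" and "rho \<ge> 0" and "0 \<le> eta" and "eta < 1" and "2 * eps \<le> eta"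
  shows "(\<forall>p1\<in>G_mean N rho eta. \<forall>p2\<in>G_mean N rho eta.
            TV p1 p2 \<le> 2 * eps \<longrightarrow> N (mean p1 - mean p2) \<le> 2 * rho)"
proof (intro ballI impI)
  fix p1 p2 assume G1: "p1 \<in> G_mean N rho eta" and G2: "p2 \<in> G_mean N rho eta"
    and "TV p1 p2 \<le> 2 * eps"
  then have "TV p1 p2 \<le> eta" using assms(5) by linarith
  moreover have "is_distr p1" "is_distr p2"
    using G1 G2 by (simp_all add: G_mean_def has_mean_def)
  ultimately obtain r where "deletion_le r p1 eta" "deletion_le r p2 eta"
    using common_deletion_if_TV_le assms(4) by blast
  then have "N (mean r - mean p1) \<le> rho" "N (mean r - mean p2) \<le> rho"
    using G1 G2 by (simp_all add: G_mean_def)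
  then show "N (mean p1 - mean p2) \<le> 2 * rho"
    using is_norm_triangle_through[OF assms(1), of "mean p1" "mean p2" "mean r"] by linarith
qed

end
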